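(* Let $n\ge 4$ and let $L=(l_1,\dots,l_n)$ be a generic length vector satisfying the strict triangle inequality. For $k=1,\dots,n$ let $N_k$ denote the number of short subsets of $[n]$ of cardinality $k$. Then the number of vertices of $\Gamma(L)$ equals $$\sum_{k=1}^n N_k\,2^{\,n-k}\;-\;2\cdot 3^{\,n-1}\;+\;2^n .$$
   Context: Let $n\ge 4$ and $L=(l_1,\dots,l_n)$ be positive reals with $l_i<\sum_{j\ne i}l_j$ for every $i$ (strict triangle inequality), and generic: there is no $J\subseteq[n]$ with $\sum_{i\in J}l_i=\sum_{i\notin J}l_i$. Here $[n]=\{1,\dots,n\}$ and $|L|=\sum_{i=1}^n l_i$. A set $I\subseteq[n]$ is short if $\sum_{i\in I}l_i<|L|/2$ and long otherwise. A cyclically ordered partition of $[n]$ into $k$ parts is a sequence $(A_1,\dots,A_k)$ of pairwise disjoint nonempty sets with union $[n]$, considered up to cyclic shifts $(A_1,\dots,A_k)\sim(A_2,\dots,A_k,A_1)$; there is no ordering inside a part. It is admissible if every part is short. The graph $\Gamma(L)$ has as vertices the admissible cyclically ordered partitions of $[n]$ into 3 parts, written $(I,J,K)$, and as edges the admissible cyclically ordered partitions into 4 parts $(A,B,C,D)$; such an edge is incident to each of the partitions $(A\cup B,C,D)$, $(A,B\cup C,D)$, $(A,B,C\cup D)$, $(D\cup A,B,C)$ that is admissible. Equivalently, two vertices are adjacent iff one is obtained from the other by moving a nonempty proper subset of one part into another part. ($\Gamma(L)$ is the 1-skeleton of a cell decomposition of the moduli space of planar configurations of $L$.) *)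

theory Defs
  imports Complex_Main
begin

text \<open>A length vector L = (l_1,...,l_n) is a function l :: nat => real, relevant on [n] = {1..n}.\<close>

definition total_length :: "(nat \<Rightarrow> real) \<Rightarrow> nat \<Rightarrow> real" where
  "total_length l n = (\<Sum>i\<in>{1..n}. l i)"

definition short :: "(nat \<Rightarrow> real) \<Rightarrow> nat \<Rightarrow> nat set \<Rightarrow> bool" where
  "short l n I \<longleftrightarrow> (\<Sum>i\<in>I. l i) < total_length l n / 2"

definition strict_triangle :: "(nat \<Rightarrow> real) \<Rightarrow> nat \<Rightarrow> bool" where
  "strict_triangle l n \<longleftrightarrow> (\<forall>i\<in>{1..n}. l i < (\<Sum>j\<in>{1..n} - {i}. l j))"

definition generic :: "(nat \<Rightarrow> real) \<Rightarrow> nat \<Rightarrow> bool" where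
  "generic l n \<longleftrightarrow> \<not> (\<exists>J. J \<subseteq> {1..n} \<and> (\<Sum>i\<in>J. l i) = (\<Sum>i\<in>{1..n} - J. l i))"

definition admissible_triple :: "(nat \<Rightarrow> real) \<Rightarrow> nat \<Rightarrow> nat set \<times> nat set \<times> nat set \<Rightarrow> bool" where
  "admissible_triple l n t = (case t of (I, J, K) \<Rightarrow>
     I \<noteq> {} \<and> J \<noteq> {} \<and> K \<noteq> {} \<and> I \<inter> J = {} \<and> J \<inter> K = {} \<and> I \<inter> K = {} \<and>
     I \<union> J \<union> K = {1..n} \<and> short l n I \<and> short l n J \<and> short l n K)"

text \<open>Cyclically ordered partition = orbit of an ordered triple under cyclic shifts.\<close>
definition cyc_class :: "nat set \<times> nat set \<times> nat set \<Rightarrow> (nat set \<times> nat set \<times> nat set) set" where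
  "cyc_class t = (case t of (I, J, K) \<Rightarrow> {(I, J, K), (J, K, I), (K, I, J)})"

definition Gamma_vertices :: "(nat \<Rightarrow> real) \<Rightarrow> nat \<Rightarrow> (nat set \<times> nat set \<times> nat set) set set" where
  "Gamma_vertices l n = cyc_class ` {t. admissible_triple l n t}"

end

theory Submission
  imports Defs
begin

text \<open>The ordered admissible triples are exactly the ordered splittings (I, J, K) of [n] into
  three short parts. For a generic L two disjoint sets are never both long, so at most one part
  of a splitting is long, and inclusion-exclusion over the three positions counts
  3^n - 3 S ordered admissible triples, where S is the sum of 2^(n - |I|) over the long sets I.
  Since the sum of 2^(n - |I|) over all I is 3^n, S = 3^n - 2^n - sum_k N_k 2^(n - k); and each
  vertex of Gamma(L) is a cyclic class of exactly three ordered triples.\<close>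

lemma sum_card_subsets_by_card:
  fixes c :: "nat \<Rightarrow> 'b::comm_semiring_1"
  assumes "finite U"
  shows "(\<Sum>k\<le>card U. of_nat (card {I. I \<subseteq> U \<and> card I = k \<and> Q I}) * c k)
       = (\<Sum>I | I \<subseteq> U \<and> Q I. c (card I))"
proof -
  let ?S = "{I. I \<subseteq> U \<and> Q I}"
  have "finite ?S" using assms by simp
  moreover have "card ` ?S \<subseteq> {..card U}" using assms by (auto intro: card_mono)
  ultimately have "(\<Sum>k\<le>card U. \<Sum>I\<in>{I \<in> ?S. card I = k}. c (card I)) = (\<Sum>I\<in>?S. c (card I))"
    using sum.group[of ?S "{..card U}" card "\<lambda>I. c (card I)"] by simp
  moreover have "{I \<in> ?S. card I = k} = {I. I \<subseteq> U \<and> card I = k \<and> Q I}" for k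
    by auto
  ultimately show ?thesis by (simp add: mult.commute)
qed

lemma sum_subsets_pow2_card_Diff:
  assumes "finite U"
  shows "(\<Sum>I | I \<subseteq> U. (2::int) ^ (card U - card I)) = 3 ^ card U"
proof -
  have "(\<Sum>I | I \<subseteq> U. (2::int) ^ (card U - card I))
      = (\<Sum>k\<le>card U. of_nat (card U choose k) * 2 ^ (card U - k))"
    using sum_card_subsets_by_card[OF assms, of "\<lambda>_. True" "\<lambda>k. (2::int) ^ (card U - k)"]
    by (simp add: n_subsets[OF assms])
  also have "\<dots> = (1 + 2) ^ card U" unfolding binomial_ring[of "1::int" 2] by simp
  finally show ?thesis by simp
qed

lemma sum_subsets_pow2_card_Diff_partition:
  assumes "finite U"
  shows "(\<Sum>I | I \<subseteq> U \<and> Q I. (2::int) ^ (card U - card I))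
       + (\<Sum>I | I \<subseteq> U \<and> \<not> Q I. 2 ^ (card U - card I)) = 3 ^ card U"
proof -
  let ?w = "\<lambda>I. (2::int) ^ (card U - card I)"
  have "sum ?w {I. I \<subseteq> U \<and> Q I} + sum ?w {I. I \<subseteq> U \<and> \<not> Q I}
      = sum ?w ({I. I \<subseteq> U \<and> Q I} \<union> {I. I \<subseteq> U \<and> \<not> Q I})"
    using assms by (intro sum.union_disjoint[symmetric]) auto
  also have "{I. I \<subseteq> U \<and> Q I} \<union> {I. I \<subseteq> U \<and> \<not> Q I} = {I. I \<subseteq> U}"
    by blast
  finally show ?thesis using sum_subsets_pow2_card_Diff[OF assms] by simp
qed

definition triple_splits :: "'a set \<Rightarrow> ('a set \<times> 'a set \<times> 'a set) set" where
  "triple_splits U = {(I, J, K). I \<inter> J = {} \<and> J \<inter> K = {} \<and> I \<inter> K = {} \<and> I \<union> J \<union> K = U}"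

lemma finite_triple_splits: "finite U \<Longrightarrow> finite (triple_splits U)"
  by (rule finite_subset[of _ "Pow U \<times> Pow U \<times> Pow U"]) (auto simp: triple_splits_def)

lemma sum_triple_splits_fst:
  fixes f :: "'a set \<Rightarrow> int"
  assumes "finite U"
  shows "(\<Sum>(I, J, K)\<in>triple_splits U. f I) = (\<Sum>I | I \<subseteq> U. f I * 2 ^ (card U - card I))"
proof -
  have "(\<Sum>(I, J, K)\<in>triple_splits U. f I) = (\<Sum>(I, J)\<in>Sigma {I. I \<subseteq> U} (\<lambda>I. Pow (U - I)). f I)"
    by (rule sum.reindex_bij_witness[where i = "\<lambda>(I, J). (I, J, U - I - J)" and j = "\<lambda>(I, J, K). (I, J)"])
       (auto simp: triple_splits_def)
  also have "\<dots> = (\<Sum>I | I \<subseteq> U. \<Sum>J\<in>Pow (U - I). f I)"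
    using assms by (subst sum.Sigma) auto
  also have "\<dots> = (\<Sum>I | I \<subseteq> U. f I * 2 ^ (card U - card I))"
    using assms by (intro sum.cong) (auto simp: card_Pow card_Diff_subset finite_subset)
  finally show ?thesis .
qed

text \<open>If no two disjoint subsets of U have property P, at most one part of a splitting has it,
  so inclusion-exclusion over the three positions has no overlap terms.\<close>

lemma card_triple_splits_avoiding:
  assumes "finite U"
    and no_disjoint: "\<And>I J. I \<subseteq> U \<Longrightarrow> J \<subseteq> U \<Longrightarrow> I \<inter> J = {} \<Longrightarrow> P I \<Longrightarrow> P J \<Longrightarrow> False"
  shows "int (card {(I, J, K) \<in> triple_splits U. \<not> P I \<and> \<not> P J \<and> \<not> P K})
       = 3 ^ card U - 3 * (\<Sum>I | I \<subseteq> U \<and> P I. 2 ^ (card U - card I))"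
proof -
  let ?T = "triple_splits U"
  let ?G = "{(I, J, K). \<not> P I \<and> \<not> P J \<and> \<not> P K}"
  let ?p = "\<lambda>I. of_bool (P I) :: int"
  have fin: "finite ?T" using assms(1) by (rule finite_triple_splits)
  have "{(I, J, K) \<in> ?T. \<not> P I \<and> \<not> P J \<and> \<not> P K} = ?T \<inter> ?G" by auto
  then have "int (card {(I, J, K) \<in> ?T. \<not> P I \<and> \<not> P J \<and> \<not> P K})
      = (\<Sum>t\<in>?T. of_bool (t \<in> ?G))"
    using fin by simp
  also have "\<dots> = (\<Sum>(I, J, K)\<in>?T. 1 - ?p I - ?p J - ?p K)"
  proof (intro sum.cong refl)
    fix t assume "t \<in> ?T"
    then obtain I J K where t: "t = (I, J, K)" and "I \<inter> J = {}" "J \<inter> K = {}" "I \<inter> K = {}"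
      and "I \<subseteq> U" "J \<subseteq> U" "K \<subseteq> U"
      by (auto simp: triple_splits_def)
    then have "\<not> (P I \<and> P J)" "\<not> (P J \<and> P K)" "\<not> (P I \<and> P K)"
      using no_disjoint by blast+
    then show "of_bool (t \<in> ?G) = (case t of (I, J, K) \<Rightarrow> 1 - ?p I - ?p J - ?p K)"
      unfolding t by auto
  qed
  also have "\<dots> = (\<Sum>(I, J, K)\<in>?T. 1) - (\<Sum>(I, J, K)\<in>?T. ?p I)
                  - (\<Sum>(I, J, K)\<in>?T. ?p J) - (\<Sum>(I, J, K)\<in>?T. ?p K)"
    by (simp add: case_prod_beta sum_subtractf)
  also have "(\<Sum>(I, J, K)\<in>?T. ?p J) = (\<Sum>(I, J, K)\<in>?T. ?p I)"
    by (rule sum.reindex_bij_witness[where i = "\<lambda>(I, J, K). (K, I, J)" and j = "\<lambda>(I, J, K). (J, K, I)"])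
       (auto simp: triple_splits_def)
  also have "(\<Sum>(I, J, K)\<in>?T. ?p K) = (\<Sum>(I, J, K)\<in>?T. ?p I)"
    by (rule sum.reindex_bij_witness[where i = "\<lambda>(I, J, K). (J, K, I)" and j = "\<lambda>(I, J, K). (K, I, J)"])
       (auto simp: triple_splits_def)
  also have "(\<Sum>(I, J, K)\<in>?T. 1) = (3::int) ^ card U"
    using sum_triple_splits_fst[OF assms(1), of "\<lambda>_. 1"] sum_subsets_pow2_card_Diff[OF assms(1)]
    by simp
  also have "(\<Sum>(I, J, K)\<in>?T. ?p I) = (\<Sum>I | I \<subseteq> U \<and> P I. 2 ^ (card U - card I))"
    using assms(1) by (simp add: sum_triple_splits_fst Int_def conj_commute)
  finally show ?thesis by simp
qed

lemma cyc_class_eq_if_mem: "x \<in> cyc_class t \<Longrightarrow> cyc_class x = cyc_class t"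
  by (cases t) (auto simp: cyc_class_def insert_commute)

lemma card_eq_three_mult_card_cyc_classes:
  assumes "finite A"
    and rotate: "\<And>I J K. (I, J, K) \<in> A \<Longrightarrow> (J, K, I) \<in> A"
    and distinct: "\<And>I J K. (I, J, K) \<in> A \<Longrightarrow> I \<noteq> J \<and> J \<noteq> K \<and> I \<noteq> K"
  shows "card A = 3 * card (cyc_class ` A)"
proof -
  have class_subset: "cyc_class t \<subseteq> A" if "t \<in> A" for t
    using that rotate[of "fst t"] rotate[of "fst (snd t)"] by (cases t) (auto simp: cyc_class_def)
  have self_mem: "t \<in> cyc_class t" for t
    by (cases t) (simp add: cyc_class_def)
  have "\<Union> (cyc_class ` A) = A"
    using class_subset self_mem by blast
  moreover have "3 * card (cyc_class ` A) = card (\<Union> (cyc_class ` A))"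
  proof (rule card_partition)
    show "finite (cyc_class ` A)" "finite (\<Union> (cyc_class ` A))"
      using assms(1) class_subset by (auto intro: finite_subset simp: cyc_class_def)
    show "card c = 3" if "c \<in> cyc_class ` A" for c
      using that distinct by (auto simp: cyc_class_def)
    show "c1 \<inter> c2 = {}" if "c1 \<in> cyc_class ` A" "c2 \<in> cyc_class ` A" "c1 \<noteq> c2" for c1 c2
      using that cyc_class_eq_if_mem by blast
  qed
  ultimately show ?thesis by simp
qed

lemma short_Diff_iff:
  assumes "generic l n" and "I \<subseteq> {1..n}"
  shows "short l n ({1..n} - I) \<longleftrightarrow> \<not> short l n I"
proof -
  have "sum l ({1..n} - I) = total_length l n - sum l I"
    using assms(2) by (simp add: sum_diff total_length_def)
  moreover have "sum l I \<noteq> sum l ({1..n} - I)"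
    using assms unfolding generic_def by blast
  ultimately show ?thesis unfolding short_def by linarith
qed

lemma disjoint_long_subsets_False:
  assumes "generic l n" and pos: "\<forall>i\<in>{1..n}. l i > 0"
    and "I \<subseteq> {1..n}" "J \<subseteq> {1..n}" "I \<inter> J = {}"
    and "\<not> short l n I" "\<not> short l n J"
  shows False
proof -
  have "sum l J \<le> sum l ({1..n} - I)"
    using assms(3-5) pos by (intro sum_mono2) (auto intro: less_imp_le)
  moreover have "short l n ({1..n} - I)"
    using short_Diff_iff[OF assms(1,3)] assms(6) by simp
  ultimately show False using assms(7) unfolding short_def by linarith
qed

text \<open>Nonemptiness of the parts is automatic: if one part is empty, the other two are
  complementary and cannot both be short.\<close>

lemma admissible_triples_eq:
  assumes "generic l n"
  shows "{t. admissible_triple l n t}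
       = {(I, J, K) \<in> triple_splits {1..n}. short l n I \<and> short l n J \<and> short l n K}"
proof -
  have nonempty: "I \<noteq> {}"
    if "(I, J, K) \<in> triple_splits {1..n}" "short l n J" "short l n K" for I J K
  proof
    assume "I = {}"
    with that(1) have "J \<subseteq> {1..n}" "K = {1..n} - J"
      by (auto simp: triple_splits_def)
    then show False using short_Diff_iff[OF assms] that(2,3) by blast
  qed
  have rotate: "(J, K, I) \<in> triple_splits U" if "(I, J, K) \<in> triple_splits U" for I J K and U :: "nat set"
    using that by (auto simp: triple_splits_def)
  show ?thesis
  proof (intro set_eqI iffI)
    fix t assume "t \<in> {t. admissible_triple l n t}"
    then show "t \<in> {(I, J, K) \<in> triple_splits {1..n}. short l n I \<and> short l n J \<and> short l n K}"
      by (cases t) (auto simp: admissible_triple_def triple_splits_def)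
  next
    fix t assume "t \<in> {(I, J, K) \<in> triple_splits {1..n}. short l n I \<and> short l n J \<and> short l n K}"
    then obtain I J K where t: "t = (I, J, K)" and split: "(I, J, K) \<in> triple_splits {1..n}"
      and short: "short l n I" "short l n J" "short l n K"
      by auto
    have "I \<noteq> {}" "J \<noteq> {}" "K \<noteq> {}"
      using nonempty[OF split] nonempty[OF rotate[OF split]] nonempty[OF rotate[OF rotate[OF split]]] short
      by auto
    then show "t \<in> {t. admissible_triple l n t}"
      using split short unfolding t admissible_triple_def triple_splits_def by auto
  qed
qed

lemma sum_short_subsets_by_card:
  assumes "short l n {}"
  shows "(\<Sum>I | I \<subseteq> {1..n} \<and> short l n I. (2::int) ^ (n - card I))
       = 2 ^ n + (\<Sum>k=1..n. int (card {I. I \<subseteq> {1..n} \<and> card I = k \<and> short l n I}) * 2 ^ (n - k))"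
proof -
  have "{I. I \<subseteq> {1..n} \<and> card I = 0 \<and> short l n I} = {{}}"
    using assms by (auto dest: finite_subset)
  moreover have "{..n} = insert 0 {1..n}" by auto
  ultimately show ?thesis
    using sum_card_subsets_by_card[of "{1..n}" "short l n" "\<lambda>k. (2::int) ^ (n - k)"] by simp
qed

theorem mainTheorem1:
  fixes l :: "nat \<Rightarrow> real" and n :: nat
  assumes "n \<ge> 4"
    and "\<forall>i\<in>{1..n}. l i > 0"
    and "strict_triangle l n"
    and "generic l n"
  shows "int (card (Gamma_vertices l n)) =
           (\<Sum>k=1..n. int (card {I. I \<subseteq> {1..n} \<and> card I = k \<and> short l n I}) * 2 ^ (n - k))
           - 2 * 3 ^ (n - 1) + 2 ^ n"
proof -
  let ?U = "{1..n}"
  let ?w = "\<lambda>I. (2::int) ^ (n - card I)"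
  let ?A = "{t. admissible_triple l n t}"
  have "total_length l n > 0"
    unfolding total_length_def using assms(1,2) by (intro sum_pos) auto
  then have "short l n {}" by (simp add: short_def)
  have "finite ?A"
    unfolding admissible_triples_eq[OF assms(4)]
    by (rule finite_subset[OF _ finite_triple_splits[of ?U]]) auto
  then have "card ?A = 3 * card (Gamma_vertices l n)"
    unfolding Gamma_vertices_def
    by (rule card_eq_three_mult_card_cyc_classes) (auto simp: admissible_triple_def)
  moreover have "int (card ?A) = 3 ^ n - 3 * (\<Sum>I | I \<subseteq> ?U \<and> \<not> short l n I. ?w I)"
    unfolding admissible_triples_eq[OF assms(4)]
    using card_triple_splits_avoiding[of ?U "\<lambda>I. \<not> short l n I"]
      disjoint_long_subsets_False[OF assms(4,2)] by fastforce
  moreover have "(\<Sum>I | I \<subseteq> ?U \<and> short l n I. ?w I) + (\<Sum>I | I \<subseteq> ?U \<and> \<not> short l n I. ?w I) = 3 ^ n"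
    using sum_subsets_pow2_card_Diff_partition[of ?U "short l n"] by simp
  moreover have "(3::int) ^ n = 3 * 3 ^ (n - 1)"
    using assms(1) by (simp add: power_eq_if)
  ultimately show ?thesis
    using sum_short_subsets_by_card[OF \<open>short l n {}\<close>] by linarith
qed

end
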